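(* Let $\alpha \in \mathbb{R}_{>0}$ and $M_\alpha = \{f(\alpha) \mid f(x) \in \mathbb{N}_0[x,x^{-1}]\}$ as an additive monoid. The following are equivalent: (a) $M_\alpha$ is an FFM; (b) $M_\alpha$ is a BFM; (c) $M_\alpha$ satisfies the ACCP.
   Context: $\mathbb{N}_0[x,x^{-1}]$ denotes the semiring of Laurent polynomials with coefficients in $\mathbb{N}_0$. For an atomic reduced additive monoid $M$ and nonzero $x \in M$, $\mathsf{Z}(x)$ is the set of factorizations of $x$ (formal sums of atoms, up to order, adding to $x$) and $\mathsf{L}(x)$ the set of their lengths (number of atoms counted with repetition). $M$ is an FFM (finite factorization monoid) if it is atomic and $\mathsf{Z}(x)$ is finite for all nonzero $x$, and a BFM (bounded factorization monoid) if it is atomic and $\mathsf{L}(x)$ is finite for all nonzero $x$. $M$ satisfies the ACCP if every ascending chain of principal ideals $x_1 + M \subseteq x_2 + M \subseteq \cdots$ eventually stabilizes. *)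

theory Defs
  imports Complex_Main "HOL-Library.Multiset"
begin

definition laurent_monoid :: "real \<Rightarrow> real set" where
  "laurent_monoid \<alpha> = {(\<Sum>k\<in>S. of_nat (c k) * \<alpha> powi k) | S c. finite (S :: int set)}"

definition mon_unit :: "'a::comm_monoid_add set \<Rightarrow> 'a \<Rightarrow> bool" where
  "mon_unit M u \<longleftrightarrow> u \<in> M \<and> (\<exists>v\<in>M. u + v = 0)"

definition mon_atom :: "'a::comm_monoid_add set \<Rightarrow> 'a \<Rightarrow> bool" where
  "mon_atom M a \<longleftrightarrow> a \<in> M \<and> \<not> mon_unit M a \<and>
     (\<forall>x\<in>M. \<forall>y\<in>M. a = x + y \<longrightarrow> mon_unit M x \<or> mon_unit M y)"

definition mon_atomic :: "'a::comm_monoid_add set \<Rightarrow> bool" where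
  "mon_atomic M \<longleftrightarrow> (\<forall>x\<in>M. \<not> mon_unit M x \<longrightarrow>
     (\<exists>A. (\<forall>a\<in>set_mset A. mon_atom M a) \<and> sum_mset A = x))"

text \<open>Factorizations (for reduced monoids): multisets of atoms summing to x.\<close>
definition factorizations :: "'a::comm_monoid_add set \<Rightarrow> 'a \<Rightarrow> 'a multiset set" where
  "factorizations M x = {A. (\<forall>a\<in>set_mset A. mon_atom M a) \<and> sum_mset A = x}"

definition lengths :: "'a::comm_monoid_add set \<Rightarrow> 'a \<Rightarrow> nat set" where
  "lengths M x = size ` factorizations M x"

definition is_FFM :: "'a::comm_monoid_add set \<Rightarrow> bool" where
  "is_FFM M \<longleftrightarrow> mon_atomic M \<and> (\<forall>x\<in>M. x \<noteq> 0 \<longrightarrow> finite (factorizations M x))"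

definition is_BFM :: "'a::comm_monoid_add set \<Rightarrow> bool" where
  "is_BFM M \<longleftrightarrow> mon_atomic M \<and> (\<forall>x\<in>M. x \<noteq> 0 \<longrightarrow> finite (lengths M x))"

definition principal_ideal :: "'a::comm_monoid_add set \<Rightarrow> 'a \<Rightarrow> 'a set" where
  "principal_ideal M x = (\<lambda>m. x + m) ` M"

definition satisfies_ACCP :: "'a::comm_monoid_add set \<Rightarrow> bool" where
  "satisfies_ACCP M \<longleftrightarrow> (\<forall>s :: nat \<Rightarrow> 'a. (\<forall>n. s n \<in> M) \<longrightarrow>
     (\<forall>n. principal_ideal M (s n) \<subseteq> principal_ideal M (s (Suc n))) \<longrightarrow>
     (\<exists>N. \<forall>n\<ge>N. principal_ideal M (s n) = principal_ideal M (s N)))"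

end

(* In a submonoid of (R>=0, +) one always has FFM ==> BFM ==> ACCP; for BFM ==> ACCP note that the
   maximal factorization length strictly drops from an element to a proper divisor.  Since
   M_alpha = M_(1/alpha) we may assume alpha <= 1, and it remains to show that M_alpha is an FFM
   unless the ACCP fails.

   If alpha = beta = 1, or if some beta > 1 satisfies every integer polynomial relation of alpha,
   then every divisor of x = f(alpha) is a sum of powers alpha^k with alpha^k <= x and
   beta^k <= f(beta); there are only finitely many such powers, so x has finitely many divisors and
   M_alpha is an FFM.  Such a beta exists for transcendental alpha (beta = 2) and for algebraic alpha
   whose minimal polynomial p has a root beta > 1.  Otherwise p has no root in [1, oo), so
   1 - x + c x^j p(x) is positive on [0, oo) for suitable c, j, and by Polya's theorem some multiple
   (1 + x)^N (1 - x + c x^j p(x)) has nonnegative coefficients.  Evaluating at alpha shows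
   (1 - alpha) (1 + alpha)^N in M_alpha, and the elements alpha^n (1 + alpha)^N generate a strictly
   ascending chain of principal ideals. *)

theory Submission
  imports Defs "HOL-Computational_Algebra.Polynomial"
begin

section \<open>Positive monoids\<close>

definition positive_monoid :: "real set \<Rightarrow> bool" where
  "positive_monoid M \<longleftrightarrow> 0 \<in> M \<and> (\<forall>x\<in>M. 0 \<le> x) \<and> (\<forall>x\<in>M. \<forall>y\<in>M. x + y \<in> M)"

definition divisors :: "real set \<Rightarrow> real \<Rightarrow> real set" where
  "divisors M x = {u \<in> M. x - u \<in> M}"

definition decompositions :: "real set \<Rightarrow> real \<Rightarrow> real multiset set" where
  "decompositions M x = {E. (\<forall>e\<in>#E. e \<in> M \<and> e \<noteq> 0) \<and> sum_mset E = x}"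

lemma size_mult_le_sum_mset:
  fixes E :: "real multiset"
  shows "\<forall>e\<in>#E. c \<le> e \<Longrightarrow> real (size E) * c \<le> sum_mset E"
  by (induction E) (auto simp: algebra_simps)

lemma finite_msets_sum_le:
  fixes V :: "real set"
  assumes "finite V" "\<And>v. v \<in> V \<Longrightarrow> 0 < v"
  shows "finite {E. set_mset E \<subseteq> V \<and> sum_mset E \<le> x}"
proof -
  define c where "c = Min (insert 1 V)"
  have c: "0 < c" "\<And>v. v \<in> V \<Longrightarrow> c \<le> v"
    using assms by (auto simp: c_def)
  have "{E. set_mset E \<subseteq> V \<and> sum_mset E \<le> x} \<subseteq> (\<Union>n\<le>nat \<lfloor>x / c\<rfloor>. multisets_of_size V n)"
  proof
    fix E assume "E \<in> {E. set_mset E \<subseteq> V \<and> sum_mset E \<le> x}"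
    then have E: "set_mset E \<subseteq> V" "sum_mset E \<le> x" by auto
    then have "real (size E) * c \<le> x"
      using size_mult_le_sum_mset[of E c] c(2) by fastforce
    then have "size E \<le> nat \<lfloor>x / c\<rfloor>"
      using c(1) by (intro le_nat_floor) (simp add: field_simps)
    with E(1) show "E \<in> (\<Union>n\<le>nat \<lfloor>x / c\<rfloor>. multisets_of_size V n)"
      by (auto simp: multisets_of_size_def)
  qed
  moreover have "finite (\<Union>n\<le>nat \<lfloor>x / c\<rfloor>. multisets_of_size V n)"
    using assms(1) by auto
  ultimately show ?thesis by (rule finite_subset)
qed

context
  fixes M :: "real set"
  assumes M: "positive_monoid M"
begin

lemma positive_monoid_zero: "0 \<in> M"
  using M by (simp add: positive_monoid_def)

lemma positive_monoid_nonneg: "x \<in> M \<Longrightarrow> 0 \<le> x"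
  using M by (simp add: positive_monoid_def)

lemma positive_monoid_add: "x \<in> M \<Longrightarrow> y \<in> M \<Longrightarrow> x + y \<in> M"
  using M by (simp add: positive_monoid_def)

lemma positive_monoid_sum_mset: "(\<And>e. e \<in># E \<Longrightarrow> e \<in> M) \<Longrightarrow> sum_mset E \<in> M"
  by (induction E) (auto intro: positive_monoid_zero positive_monoid_add)

lemma positive_monoid_unit_iff: "mon_unit M u \<longleftrightarrow> u = 0"
  using positive_monoid_zero positive_monoid_nonneg unfolding mon_unit_def
  by (metis add.right_neutral add_nonneg_eq_0_iff)

lemma positive_monoid_atom_iff:
  "mon_atom M a \<longleftrightarrow> a \<in> M \<and> a \<noteq> 0 \<and> (\<forall>x\<in>M. \<forall>y\<in>M. a = x + y \<longrightarrow> x = 0 \<or> y = 0)"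
  by (simp add: mon_atom_def positive_monoid_unit_iff)

lemma factorizations_subset_decompositions: "factorizations M x \<subseteq> decompositions M x"
  by (auto simp: factorizations_def decompositions_def positive_monoid_atom_iff)

lemma mem_divisors_sum_mset:
  assumes "a \<in># E" "\<And>e. e \<in># E \<Longrightarrow> e \<in> M"
  shows "a \<in> divisors M (sum_mset E)"
proof -
  obtain E' where "E = add_mset a E'" using assms(1) by (metis multi_member_split)
  then show ?thesis using assms by (auto simp: divisors_def intro!: positive_monoid_sum_mset)
qed

lemma factorization_exists:
  assumes "mon_atomic M" "x \<in> M"
  obtains A where "A \<in> factorizations M x"
proof (cases "x = 0")
  case True
  then show ?thesis using that[of "{#}"] by (simp add: factorizations_def)
next
  case False
  then show ?thesis
    using assms that by (auto simp: mon_atomic_def factorizations_def positive_monoid_unit_iff)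
qed

lemma finite_decompositions:
  assumes "finite (divisors M x)"
  shows "finite (decompositions M x)"
proof -
  have "decompositions M x \<subseteq> {E. set_mset E \<subseteq> divisors M x - {0} \<and> sum_mset E \<le> x}"
    using mem_divisors_sum_mset by (auto simp: decompositions_def)
  moreover have "finite {E. set_mset E \<subseteq> divisors M x - {0} \<and> sum_mset E \<le> x}"
    using assms positive_monoid_nonneg
    by (intro finite_msets_sum_le) (auto simp: divisors_def less_le)
  ultimately show ?thesis by (rule finite_subset)
qed

lemma longest_decomposition_mem_factorizations:
  assumes E: "E \<in> decompositions M x"
    and longest: "\<And>E'. E' \<in> decompositions M x \<Longrightarrow> size E' \<le> size E"
  shows "E \<in> factorizations M x"
proof -
  have "mon_atom M e" if "e \<in># E" for e
    unfolding positive_monoid_atom_iff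
  proof (intro conjI ballI impI)
    show "e \<in> M" "e \<noteq> 0" using E \<open>e \<in># E\<close> by (auto simp: decompositions_def)
    fix y z assume yz: "y \<in> M" "z \<in> M" "e = y + z"
    obtain E0 where E0: "E = add_mset e E0" using \<open>e \<in># E\<close> by (metis multi_member_split)
    show "y = 0 \<or> z = 0"
    proof (rule ccontr)
      assume "\<not> (y = 0 \<or> z = 0)"
      then have "add_mset y (add_mset z E0) \<in> decompositions M x"
        using E E0 yz by (auto simp: decompositions_def)
      from longest[OF this] show False using E0 by simp
    qed
  qed
  then show ?thesis using E by (auto simp: decompositions_def factorizations_def)
qed

lemma FFM_if_finite_divisors:
  assumes fin: "\<And>x. x \<in> M \<Longrightarrow> x \<noteq> 0 \<Longrightarrow> finite (divisors M x)"
  shows "is_FFM M"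
proof -
  have "\<exists>A. (\<forall>a\<in>#A. mon_atom M a) \<and> sum_mset A = x" if "x \<in> M" "x \<noteq> 0" for x
  proof -
    let ?D = "decompositions M x"
    have "finite ?D" using finite_decompositions that fin by blast
    moreover have "{#x#} \<in> ?D" using that by (simp add: decompositions_def)
    ultimately have "Max (size ` ?D) \<in> size ` ?D" by (intro Max_in) auto
    then obtain E where "E \<in> ?D" "size E = Max (size ` ?D)" by auto
    then have "E \<in> factorizations M x"
      using \<open>finite ?D\<close> by (intro longest_decomposition_mem_factorizations) auto
    then show ?thesis by (auto simp: factorizations_def)
  qed
  then have "mon_atomic M"
    by (simp add: mon_atomic_def positive_monoid_unit_iff)
  moreover have "finite (factorizations M x)" if "x \<in> M" "x \<noteq> 0" for x
    using finite_decompositions[OF fin[OF that]] factorizations_subset_decompositions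
    by (rule finite_subset[rotated])
  ultimately show ?thesis by (simp add: is_FFM_def)
qed

lemma principal_ideal_subset_iff:
  assumes "x \<in> M" "y \<in> M"
  shows "principal_ideal M x \<subseteq> principal_ideal M y \<longleftrightarrow> x - y \<in> M"
proof
  assume "principal_ideal M x \<subseteq> principal_ideal M y"
  moreover have "x \<in> principal_ideal M x"
    using positive_monoid_zero by (force simp: principal_ideal_def)
  ultimately show "x - y \<in> M" by (auto simp: principal_ideal_def)
next
  assume "x - y \<in> M"
  then have "x + m = y + ((x - y) + m) \<and> (x - y) + m \<in> M" if "m \<in> M" for m
    using that positive_monoid_add by simp
  then show "principal_ideal M x \<subseteq> principal_ideal M y"
    unfolding principal_ideal_def by fast
qed

lemma factorizations_zero_subset: "factorizations M 0 \<subseteq> {{#}}"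
proof
  fix A assume A: "A \<in> factorizations M 0"
  show "A \<in> {{#}}"
  proof (rule ccontr)
    assume "A \<notin> {{#}}"
    then obtain a A' where A': "A = add_mset a A'" by (metis multiset_cases singletonI)
    have atoms: "\<forall>e\<in>#A. mon_atom M e" and "sum_mset A = 0"
      using A by (auto simp: factorizations_def)
    then have "a \<in> M" "a \<noteq> 0" "a + sum_mset A' = 0"
      using A' by (simp_all add: positive_monoid_atom_iff)
    moreover have "sum_mset A' \<in> M"
      using atoms A' by (intro positive_monoid_sum_mset) (simp add: mon_atom_def)
    ultimately show False using positive_monoid_nonneg by (metis add_nonneg_eq_0_iff)
  qed
qed

lemma lengths_finite_nonempty:
  assumes "is_BFM M" "x \<in> M"
  shows "finite (lengths M x)" "lengths M x \<noteq> {}"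
proof -
  have "finite (lengths M 0)"
    unfolding lengths_def using factorizations_zero_subset finite_subset by blast
  then show "finite (lengths M x)" using assms by (cases "x = 0") (simp_all add: is_BFM_def)
  have "mon_atomic M" using assms(1) by (simp add: is_BFM_def)
  then obtain A where "A \<in> factorizations M x" using factorization_exists[OF _ assms(2)] by blast
  then show "lengths M x \<noteq> {}" by (auto simp: lengths_def)
qed

lemma BFM_max_length_less:
  assumes B: "is_BFM M" and "y \<in> M" "x - y \<in> M" "x \<noteq> y"
  shows "Max (lengths M y) < Max (lengths M x)"
proof -
  have at: "mon_atomic M" using B by (simp add: is_BFM_def)
  have xM: "x \<in> M" using positive_monoid_add[OF \<open>y \<in> M\<close> \<open>x - y \<in> M\<close>] by simp
  obtain A where A: "A \<in> factorizations M y" "size A = Max (lengths M y)"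
    using Max_in[OF lengths_finite_nonempty[OF B \<open>y \<in> M\<close>]] by (auto simp: lengths_def)
  obtain C where C: "C \<in> factorizations M (x - y)"
    using factorization_exists[OF at \<open>x - y \<in> M\<close>] .
  have "C \<noteq> {#}" using C \<open>x \<noteq> y\<close> by (auto simp: factorizations_def)
  have "A + C \<in> factorizations M x" using A C by (auto simp: factorizations_def)
  then have "size (A + C) \<in> lengths M x" unfolding lengths_def by (rule imageI)
  then have "size (A + C) \<le> Max (lengths M x)"
    using lengths_finite_nonempty(1)[OF B xM] by (rule Max_ge[rotated])
  then show ?thesis using A(2) \<open>C \<noteq> {#}\<close> by (simp add: nonempty_has_size)
qed

lemma BFM_imp_ACCP:
  assumes B: "is_BFM M"
  shows "satisfies_ACCP M"
  unfolding satisfies_ACCP_def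
proof (intro allI impI)
  fix s assume sM: "\<forall>n. s n \<in> M"
    and chain: "\<forall>n. principal_ideal M (s n) \<subseteq> principal_ideal M (s (Suc n))"
  have diff: "s m - s n \<in> M" if "m \<le> n" for m n
  proof -
    have "principal_ideal M (s m) \<subseteq> principal_ideal M (s n)"
      using lift_Suc_mono_le[of "\<lambda>n. principal_ideal M (s n)", OF chain[rule_format] that] .
    then show ?thesis using principal_ideal_subset_iff sM by simp
  qed
  obtain N where N: "\<And>n. Max (lengths M (s N)) \<le> Max (lengths M (s n))"
    using ex_has_least_nat[of "\<lambda>_. True" 0 "\<lambda>n. Max (lengths M (s n))"] by blast
  have "s n = s N" if "n \<ge> N" for n
  proof (rule ccontr)
    assume "s n \<noteq> s N"
    then have "Max (lengths M (s n)) < Max (lengths M (s N))"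
      using BFM_max_length_less[OF B] sM diff[OF that] by simp
    with N[of n] show False by simp
  qed
  then show "\<exists>N. \<forall>n\<ge>N. principal_ideal M (s n) = principal_ideal M (s N)"
    by metis
qed

lemma not_ACCP_if_strictly_decreasing:
  assumes sM: "\<And>n. s n \<in> M" and "\<And>n. s n - s (Suc n) \<in> M" and "\<And>n. s (Suc n) < s n"
  shows "\<not> satisfies_ACCP M"
proof
  assume "satisfies_ACCP M"
  moreover have "principal_ideal M (s n) \<subseteq> principal_ideal M (s (Suc n))" for n
    using principal_ideal_subset_iff sM assms(2) by simp
  ultimately obtain N where N: "\<forall>n\<ge>N. principal_ideal M (s n) = principal_ideal M (s N)"
    using sM unfolding satisfies_ACCP_def by blast
  have "principal_ideal M (s (Suc N)) \<subseteq> principal_ideal M (s N)"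
    using N[rule_format, of "Suc N"] by simp
  then have "s (Suc N) - s N \<in> M" using principal_ideal_subset_iff sM by simp
  then show False using assms(3)[of N] positive_monoid_nonneg by fastforce
qed

lemma FFM_BFM_ACCP_equiv:
  assumes "is_FFM M \<or> \<not> satisfies_ACCP M"
  shows "(is_FFM M \<longleftrightarrow> is_BFM M) \<and> (is_BFM M \<longleftrightarrow> satisfies_ACCP M)"
proof -
  have "is_FFM M \<Longrightarrow> is_BFM M" by (auto simp: is_FFM_def is_BFM_def lengths_def)
  then show ?thesis using assms BFM_imp_ACCP by blast
qed

end

section \<open>Evaluating Laurent polynomials\<close>

text \<open>A multiset of exponents encodes a Laurent polynomial with coefficients in \<open>\<nat>\<close>:
  the multiplicity of \<open>k\<close> is the coefficient of \<open>x powi k\<close>.\<close>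
definition laurent_eval :: "real \<Rightarrow> int multiset \<Rightarrow> real" where
  "laurent_eval \<alpha> A = (\<Sum>k\<in>#A. \<alpha> powi k)"

lemma laurent_eval_empty [simp]: "laurent_eval \<alpha> {#} = 0"
  and laurent_eval_add_mset [simp]: "laurent_eval \<alpha> (add_mset k A) = \<alpha> powi k + laurent_eval \<alpha> A"
  and laurent_eval_union [simp]: "laurent_eval \<alpha> (A + B) = laurent_eval \<alpha> A + laurent_eval \<alpha> B"
  by (simp_all add: laurent_eval_def)

lemma laurent_eval_sum_replicate:
  assumes "finite S"
  shows "laurent_eval \<alpha> (\<Sum>i\<in>S. replicate_mset (c i) (f i)) = (\<Sum>i\<in>S. of_nat (c i) * \<alpha> powi f i)"
  using assms by (induction S rule: finite_induct) (simp_all add: laurent_eval_def)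

lemma mset_eq_sum_replicate_count: "A = (\<Sum>k\<in>set_mset A. replicate_mset (count A k) k)"
  by (rule multiset_eqI) (simp add: count_sum not_in_iff)

lemma laurent_monoid_eq_range: "laurent_monoid \<alpha> = range (laurent_eval \<alpha>)"
proof (intro equalityI subsetI)
  fix x assume "x \<in> laurent_monoid \<alpha>"
  then obtain S c where "finite (S :: int set)" "x = (\<Sum>k\<in>S. of_nat (c k) * \<alpha> powi k)"
    by (auto simp: laurent_monoid_def)
  then have "x = laurent_eval \<alpha> (\<Sum>k\<in>S. replicate_mset (c k) k)"
    using laurent_eval_sum_replicate[of S \<alpha> c "\<lambda>k. k"] by simp
  then show "x \<in> range (laurent_eval \<alpha>)" by blast
next
  fix x assume "x \<in> range (laurent_eval \<alpha>)"
  then obtain A where "x = laurent_eval \<alpha> A" by blast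
  also have "\<dots> = (\<Sum>k\<in>set_mset A. of_nat (count A k) * \<alpha> powi k)"
    by (subst mset_eq_sum_replicate_count) (simp add: laurent_eval_sum_replicate)
  finally show "x \<in> laurent_monoid \<alpha>" unfolding laurent_monoid_def by blast
qed

lemma laurent_eval_nonneg: "0 < \<alpha> \<Longrightarrow> 0 \<le> laurent_eval \<alpha> A"
  by (induction A) auto

lemma powi_le_laurent_eval:
  assumes "0 < \<alpha>" "k \<in># A"
  shows "\<alpha> powi k \<le> laurent_eval \<alpha> A"
proof -
  obtain A' where "A = add_mset k A'" using assms(2) by (metis multi_member_split)
  then show ?thesis using laurent_eval_nonneg[OF assms(1), of A'] by simp
qed

lemma positive_monoid_laurent:
  assumes "0 < \<alpha>"
  shows "positive_monoid (range (laurent_eval \<alpha>))"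
proof -
  have "laurent_eval \<alpha> A + laurent_eval \<alpha> B \<in> range (laurent_eval \<alpha>)" for A B
    by (metis laurent_eval_union rangeI)
  moreover have "0 \<in> range (laurent_eval \<alpha>)" by (metis laurent_eval_empty rangeI)
  ultimately show ?thesis using assms by (auto simp: positive_monoid_def laurent_eval_nonneg)
qed

lemma laurent_eval_inverse: "laurent_eval (inverse \<alpha>) A = laurent_eval \<alpha> (image_mset uminus A)"
  by (induction A) (simp_all add: power_int_minus power_int_inverse)

lemma laurent_monoid_inverse: "laurent_monoid (inverse \<alpha>) = laurent_monoid \<alpha>"
proof -
  have "laurent_eval \<alpha> A = laurent_eval (inverse \<alpha>) (image_mset uminus A)" for A
    by (simp add: laurent_eval_inverse multiset.map_comp o_def)
  then show ?thesis
    unfolding laurent_monoid_eq_range by (auto simp: laurent_eval_inverse)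
qed

lemma power_mult_laurent_eval:
  assumes "\<alpha> \<noteq> 0"
  shows "\<alpha> ^ n * laurent_eval \<alpha> A = laurent_eval \<alpha> (image_mset (\<lambda>k. k + int n) A)"
  by (induction A) (simp_all add: assms power_int_add algebra_simps)

section \<open>Integer polynomials vanishing at \<open>\<alpha>\<close>\<close>

abbreviation ipoly :: "int poly \<Rightarrow> real \<Rightarrow> real" where
  "ipoly P \<equiv> poly (map_poly of_int P)"

lemma map_poly_of_int_add:
  "map_poly of_int (p + q) = (map_poly of_int p + map_poly of_int q :: 'a :: ring_1 poly)"
  by (rule poly_eqI) (simp add: coeff_map_poly)

lemma map_poly_of_int_minus: "map_poly of_int (- p) = (- map_poly of_int p :: 'a :: ring_1 poly)"
  by (rule poly_eqI) (simp add: coeff_map_poly)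

lemma map_poly_of_int_diff:
  "map_poly of_int (p - q) = (map_poly of_int p - map_poly of_int q :: 'a :: ring_1 poly)"
  by (rule poly_eqI) (simp add: coeff_map_poly)

lemma map_poly_of_int_mult:
  "map_poly of_int (p * q) = (map_poly of_int p * map_poly of_int q :: 'a :: comm_ring_1 poly)"
  by (rule poly_eqI) (simp add: coeff_map_poly coeff_mult)

lemma map_poly_of_int_power:
  "map_poly of_int (p ^ n) = (map_poly of_int p ^ n :: 'a :: comm_ring_1 poly)"
  by (induction n) (simp_all add: map_poly_of_int_mult)

lemma map_poly_of_int_smult:
  "map_poly of_int (smult c p) = (smult (of_int c) (map_poly of_int p) :: 'a :: comm_ring_1 poly)"
  by (rule poly_eqI) (simp add: coeff_map_poly)

lemmas map_poly_of_int_simps = map_poly_of_int_add map_poly_of_int_minus map_poly_of_int_diff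
  map_poly_of_int_mult map_poly_of_int_power map_poly_of_int_smult map_poly_monom map_poly_pCons

lemma ipoly_of_int: "ipoly P (of_int x) = of_int (poly P x)"
  by (induction P) (simp_all add: map_poly_pCons)

lemma laurent_eval_eq_ipoly:
  "\<forall>k\<in>#A. 0 \<le> k \<Longrightarrow> laurent_eval x A = ipoly (\<Sum>k\<in>#A. monom 1 (nat k)) x"
  by (induction A) (simp_all add: map_poly_of_int_simps poly_monom power_int_def)

lemma laurent_eval_transfer:
  assumes \<alpha>: "0 < \<alpha>" and \<beta>: "0 < \<beta>"
    and transfer: "\<And>Q. ipoly Q \<alpha> = 0 \<Longrightarrow> ipoly Q \<beta> = 0"
    and eq: "laurent_eval \<alpha> A = laurent_eval \<alpha> B"
  shows "laurent_eval \<beta> A = laurent_eval \<beta> B"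
proof -
  \<comment> \<open>Multiplying by \<open>x ^ n\<close> clears the negative exponents, so that the relation
    at \<open>\<alpha>\<close> becomes an integer polynomial vanishing at \<open>\<alpha>\<close>.\<close>
  define n where "n = Max (insert 0 ((\<lambda>k. nat (- k)) ` set_mset (A + B)))"
  define shift where "shift = image_mset (\<lambda>k. k + int n)"
  define Q where "Q = (\<Sum>k\<in>#shift A. monom 1 (nat k)) - (\<Sum>k\<in>#shift B. monom (1::int) (nat k))"
  have "nat (- k) \<le> n" if "k \<in># A + B" for k
    using that by (auto simp: n_def)
  then have "\<forall>k\<in>#shift A. 0 \<le> k" "\<forall>k\<in>#shift B. 0 \<le> k"
    by (fastforce simp: shift_def)+
  then have Q: "ipoly Q x = x ^ n * (laurent_eval x A - laurent_eval x B)" if "x \<noteq> 0" for x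
    using that by (simp add: Q_def map_poly_of_int_diff laurent_eval_eq_ipoly[symmetric]
        power_mult_laurent_eval shift_def right_diff_distrib)
  have "ipoly Q \<beta> = 0" using transfer Q[of \<alpha>] \<alpha> eq by simp
  then show ?thesis using Q[of \<beta>] \<beta> by simp
qed

lemma ipoly_eq_0_if_not_algebraic:
  assumes "\<not> algebraic \<alpha>" "ipoly Q \<alpha> = 0"
  shows "Q = 0"
proof (rule ccontr)
  assume "Q \<noteq> 0"
  then have "map_poly (of_int :: int \<Rightarrow> real) Q \<noteq> 0" by (simp add: map_poly_eq_0_iff)
  with assms(2) have "algebraic \<alpha>" by (intro algebraicI) (auto simp: coeff_map_poly)
  with assms(1) show False ..
qed

definition minimal_int_poly :: "real \<Rightarrow> int poly \<Rightarrow> bool" where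
  "minimal_int_poly \<alpha> P \<longleftrightarrow> P \<noteq> 0 \<and> ipoly P \<alpha> = 0 \<and>
     (\<forall>Q. Q \<noteq> 0 \<and> ipoly Q \<alpha> = 0 \<longrightarrow> degree P \<le> degree Q)"

lemma minimal_int_poly_exists:
  assumes "algebraic \<alpha>"
  obtains P where "minimal_int_poly \<alpha> P"
proof -
  obtain Q where "Q \<noteq> 0" "ipoly Q \<alpha> = 0" using algebraicE'[OF assms] by blast
  then obtain P where "P \<noteq> 0 \<and> ipoly P \<alpha> = 0"
    "\<And>Q. Q \<noteq> 0 \<and> ipoly Q \<alpha> = 0 \<Longrightarrow> degree P \<le> degree Q"
    using ex_has_least_nat[of "\<lambda>P. P \<noteq> 0 \<and> ipoly P \<alpha> = 0" Q degree] by blast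
  then show ?thesis using that by (auto simp: minimal_int_poly_def)
qed

lemma minimal_int_poly_root_transfer:
  assumes P: "minimal_int_poly \<alpha> P" and "ipoly P \<beta> = 0" and "ipoly Q \<alpha> = 0"
  shows "ipoly Q \<beta> = 0"
proof -
  have "P \<noteq> 0" using P by (simp add: minimal_int_poly_def)
  then obtain c q where "c \<noteq> 0" and cQ: "smult c Q = P * q + pseudo_mod Q P"
    and "pseudo_mod Q P = 0 \<or> degree (pseudo_mod Q P) < degree P"
    using pseudo_mod by blast
  have eval: "of_int c * ipoly Q x = ipoly P x * ipoly q x + ipoly (pseudo_mod Q P) x" for x
    using arg_cong[OF cQ, of "\<lambda>p. ipoly p x"] by (simp add: map_poly_of_int_simps)
  have "ipoly (pseudo_mod Q P) \<alpha> = 0"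
    using eval[of \<alpha>] P \<open>ipoly Q \<alpha> = 0\<close> by (simp add: minimal_int_poly_def)
  then have "pseudo_mod Q P = 0"
    using P \<open>pseudo_mod Q P = 0 \<or> _\<close> by (auto simp: minimal_int_poly_def)
  then show ?thesis using eval[of \<beta>] \<open>ipoly P \<beta> = 0\<close> \<open>c \<noteq> 0\<close> by simp
qed

lemma minimal_int_poly_not_root_1:
  assumes P: "minimal_int_poly \<alpha> P" and "\<alpha> \<noteq> 1"
  shows "ipoly P 1 \<noteq> 0"
proof
  assume "ipoly P 1 = 0"
  then have "poly P 1 = 0"
    using ipoly_of_int[of P 1] by simp
  then obtain Q where Q: "P = [:-1, 1:] * Q" using poly_eq_0_iff_dvd by blast
  have "Q \<noteq> 0" using P Q by (auto simp: minimal_int_poly_def)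
  then have "degree P = Suc (degree Q)"
    unfolding Q by (simp add: degree_mult_eq del: mult_pCons_left)
  moreover have "ipoly P \<alpha> = (\<alpha> - 1) * ipoly Q \<alpha>"
    unfolding Q by (simp add: map_poly_of_int_mult map_poly_pCons del: mult_pCons_left)
  then have "(\<alpha> - 1) * ipoly Q \<alpha> = 0" using P by (simp add: minimal_int_poly_def)
  then have "ipoly Q \<alpha> = 0" using \<open>\<alpha> \<noteq> 1\<close> by simp
  with P \<open>Q \<noteq> 0\<close> have "degree P \<le> degree Q" by (simp add: minimal_int_poly_def)
  ultimately show False by simp
qed

lemma int_poly_without_root_ge_1:
  assumes "\<alpha> \<noteq> 1" and no_conjugate: "\<not> (\<exists>\<beta>>1. \<forall>Q. ipoly Q \<alpha> = 0 \<longrightarrow> ipoly Q \<beta> = 0)"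
  obtains P where "ipoly P \<alpha> = 0" "\<And>x. 1 \<le> x \<Longrightarrow> ipoly P x \<noteq> 0"
proof -
  have "algebraic \<alpha>"
  proof (rule ccontr)
    assume "\<not> algebraic \<alpha>"
    then have "\<forall>Q. ipoly Q \<alpha> = 0 \<longrightarrow> ipoly Q 2 = 0"
      using ipoly_eq_0_if_not_algebraic[of \<alpha>] by fastforce
    moreover have "(1::real) < 2" by simp
    ultimately show False using no_conjugate by blast
  qed
  then obtain P where P: "minimal_int_poly \<alpha> P" by (rule minimal_int_poly_exists)
  have "ipoly P x \<noteq> 0" if "1 \<le> x" for x
  proof (cases "x = 1")
    case True
    then show ?thesis using minimal_int_poly_not_root_1[OF P \<open>\<alpha> \<noteq> 1\<close>] by simp
  next
    case False
    show ?thesis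
    proof
      assume "ipoly P x = 0"
      then have "\<forall>Q. ipoly Q \<alpha> = 0 \<longrightarrow> ipoly Q x = 0"
        using minimal_int_poly_root_transfer[OF P] by blast
      moreover have "1 < x" using False that by simp
      ultimately show False using no_conjugate by blast
    qed
  qed
  moreover have "ipoly P \<alpha> = 0" using P by (simp add: minimal_int_poly_def)
  ultimately show ?thesis using that by blast
qed

section \<open>Finite factorization\<close>

lemma finite_divisors_laurent:
  assumes \<alpha>: "0 < \<alpha>" and \<beta>: "0 < \<beta>"
    and transfer: "\<And>A B. laurent_eval \<alpha> A = laurent_eval \<alpha> B \<Longrightarrow> laurent_eval \<beta> A = laurent_eval \<beta> B"
    and fin: "\<And>X Y. finite {\<alpha> powi k | k. \<alpha> powi k \<le> X \<and> \<beta> powi k \<le> Y}"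
  shows "finite (divisors (range (laurent_eval \<alpha>)) (laurent_eval \<alpha> A))"
proof -
  define x where "x = laurent_eval \<alpha> A"
  define V where "V = {\<alpha> powi k | k. \<alpha> powi k \<le> x \<and> \<beta> powi k \<le> laurent_eval \<beta> A}"
  have "divisors (range (laurent_eval \<alpha>)) x \<subseteq> sum_mset ` {E. set_mset E \<subseteq> V \<and> sum_mset E \<le> x}"
  proof
    fix u assume "u \<in> divisors (range (laurent_eval \<alpha>)) x"
    then obtain B C where u: "u = laurent_eval \<alpha> B" and "x - u = laurent_eval \<alpha> C"
      by (auto simp: divisors_def)
    then have BC: "laurent_eval \<alpha> (B + C) = x" by simp
    then have "laurent_eval \<beta> (B + C) = laurent_eval \<beta> A" using transfer x_def by blast
    with BC have "\<alpha> powi k \<in> V" if "k \<in># B" for k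
      using that powi_le_laurent_eval[OF \<alpha>, of k "B + C"] powi_le_laurent_eval[OF \<beta>, of k "B + C"]
      by (auto simp: V_def)
    moreover have "u \<le> x" using BC u laurent_eval_nonneg[OF \<alpha>, of C] by simp
    ultimately have "image_mset (\<lambda>k. \<alpha> powi k) B \<in> {E. set_mset E \<subseteq> V \<and> sum_mset E \<le> x}"
      by (auto simp: u laurent_eval_def)
    then show "u \<in> sum_mset ` {E. set_mset E \<subseteq> V \<and> sum_mset E \<le> x}"
      by (auto simp: u laurent_eval_def)
  qed
  moreover have "finite {E. set_mset E \<subseteq> V \<and> sum_mset E \<le> x}"
    using fin \<alpha> by (intro finite_msets_sum_le) (auto simp: V_def)
  ultimately show ?thesis unfolding x_def by (meson finite_imageI finite_subset)
qed

lemma FFM_laurent_if_ipoly_transfer: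
  assumes "0 < \<alpha>" "0 < \<beta>"
    and "\<And>Q. ipoly Q \<alpha> = 0 \<Longrightarrow> ipoly Q \<beta> = 0"
    and "\<And>X Y. finite {\<alpha> powi k | k. \<alpha> powi k \<le> X \<and> \<beta> powi k \<le> Y}"
  shows "is_FFM (range (laurent_eval \<alpha>))"
  using assms finite_divisors_laurent[OF assms(1,2) laurent_eval_transfer[OF assms(1-3)]]
  by (intro FFM_if_finite_divisors positive_monoid_laurent) auto

lemma finite_powi_exponents:
  fixes a b :: real
  assumes a: "0 < a" "a < 1" and b: "1 < b"
  shows "finite {k. a powi k \<le> X \<and> b powi k \<le> Y}"
proof -
  have ia: "1 < inverse a" using a by (simp add: one_less_inverse)
  obtain n1 where n1: "X < inverse a ^ n1" using real_arch_pow[OF ia] by blast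
  obtain n2 where n2: "Y < b ^ n2" using real_arch_pow[OF b] by blast
  have "k \<in> {- int n1..int n2}" if "a powi k \<le> X" "b powi k \<le> Y" for k
  proof -
    have "inverse a powi int n1 \<le> inverse a powi (- k)" if "k < - int n1"
      using that ia by (intro power_int_increasing) auto
    moreover have "b powi int n2 \<le> b powi k" if "int n2 < k"
      using that b by (intro power_int_increasing) auto
    ultimately show ?thesis
      using \<open>a powi k \<le> X\<close> \<open>b powi k \<le> Y\<close> n1 n2
      by (force simp: power_int_minus power_int_inverse)
  qed
  then show ?thesis by (blast intro: finite_subset[of _ "{- int n1..int n2}"])
qed

lemma FFM_laurent_1: "is_FFM (range (laurent_eval 1))"
  by (rule FFM_laurent_if_ipoly_transfer[of 1 1]) (auto intro: finite_subset[of _ "{1}"])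

lemma FFM_laurent_if_conjugate_gt_1:
  assumes "0 < \<alpha>" "\<alpha> < 1" "1 < \<beta>"
    and "\<And>Q. ipoly Q \<alpha> = 0 \<Longrightarrow> ipoly Q \<beta> = 0"
  shows "is_FFM (range (laurent_eval \<alpha>))"
proof (rule FFM_laurent_if_ipoly_transfer[OF assms(1) _ assms(4)])
  fix X Y
  have "{\<alpha> powi k | k. \<alpha> powi k \<le> X \<and> \<beta> powi k \<le> Y}
      = (\<lambda>k. \<alpha> powi k) ` {k. \<alpha> powi k \<le> X \<and> \<beta> powi k \<le> Y}" by blast
  then show "finite {\<alpha> powi k | k. \<alpha> powi k \<le> X \<and> \<beta> powi k \<le> Y}"
    using finite_powi_exponents[OF assms(1-3)] by simp
qed (use assms in simp)

section \<open>Polya's theorem\<close>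

lemma choose_mult_fact_eq_prod: "real (m choose k) * fact k = (\<Prod>j<k. real m - real j)"
  by (simp add: binomial_gbinomial gbinomial_mult_fact' atLeast0LessThan)

lemma choose_mult_falling:
  assumes "i \<le> n"
  shows "real ((N + n) choose n) * fact n * (if i \<le> m then real (N choose (m - i)) else 0)
    = real ((N + n) choose m) * ((\<Prod>j<i. real m - real j) * (\<Prod>j<n - i. real (N + n - m) - real j))"
proof (cases "i \<le> m")
  case True
  \<comment> \<open>for \<open>i \<le> m \<le> N + i\<close> both sides equal \<open>(N + n)! / ((m - i)! (N + i - m)!)\<close>\<close>
  have "real ((N + n) choose n) * fact n * real (N choose (m - i))
    = real ((N + n) choose m) * (real (m choose i) * fact i) * (real ((N + n - m) choose (n - i)) * fact (n - i))"
  proof (cases "m - i \<le> N")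
    case True
    then have "m \<le> N + n" "n - i \<le> N + n - m" using \<open>i \<le> m\<close> assms by auto
    then show ?thesis using True \<open>i \<le> m\<close> assms by (simp add: binomial_fact field_simps)
  next
    case False
    then have "N choose (m - i) = 0" "(N + n) choose m = 0 \<or> (N + n - m) choose (n - i) = 0"
      using \<open>i \<le> m\<close> assms by (auto intro!: binomial_eq_0)
    then show ?thesis by (auto simp del: binomial_eq_0_iff)
  qed
  then show ?thesis using True by (simp only: choose_mult_fact_eq_prod if_True mult.assoc)
next
  case False
  then show ?thesis by (auto simp: prod_zero_iff)
qed

lemma prod_approx:
  fixes x y :: "nat \<Rightarrow> real"
  assumes "\<And>j. j < k \<Longrightarrow> \<bar>x j\<bar> \<le> B \<and> \<bar>y j\<bar> \<le> B \<and> \<bar>x j - y j\<bar> \<le> d"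
  shows "\<bar>(\<Prod>j<k. x j) - (\<Prod>j<k. y j)\<bar> \<le> real k * d * B ^ (k - 1)"
  using assms
proof (induction k)
  case 0
  then show ?case by simp
next
  case (Suc k)
  let ?X = "\<Prod>j<k. x j" and ?Y = "\<Prod>j<k. y j"
  have IH: "\<bar>?X - ?Y\<bar> \<le> real k * d * B ^ (k - 1)" using Suc by auto
  have k: "\<bar>x k\<bar> \<le> B" "\<bar>y k\<bar> \<le> B" "\<bar>x k - y k\<bar> \<le> d" using Suc.prems[of k] by auto
  then have "0 \<le> B" "0 \<le> d" by linarith+
  have "\<bar>?X\<bar> \<le> (\<Prod>j<k. B)"
    unfolding abs_prod using Suc.prems by (intro prod_mono) auto
  then have "\<bar>?X\<bar> \<le> B ^ k" by simp
  have "(\<Prod>j<Suc k. x j) - (\<Prod>j<Suc k. y j) = ?X * (x k - y k) + y k * (?X - ?Y)"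
    by (simp add: algebra_simps)
  then have "\<bar>(\<Prod>j<Suc k. x j) - (\<Prod>j<Suc k. y j)\<bar> \<le> \<bar>?X\<bar> * \<bar>x k - y k\<bar> + \<bar>y k\<bar> * \<bar>?X - ?Y\<bar>"
    by (metis abs_mult abs_triangle_ineq)
  also have "\<dots> \<le> B ^ k * d + B * (real k * d * B ^ (k - 1))"
    using \<open>\<bar>?X\<bar> \<le> B ^ k\<close> k IH \<open>0 \<le> B\<close> \<open>0 \<le> d\<close> by (intro add_mono mult_mono) auto
  also have "\<dots> = real (Suc k) * d * B ^ (Suc k - 1)"
    by (cases k) (simp_all add: algebra_simps)
  finally show ?case .
qed

lemma falling_products_approx:
  fixes a b B :: real
  assumes "0 \<le> a" "a \<le> B" "0 \<le> b" "b \<le> B" "real n \<le> B" "i \<le> n"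
  shows "\<bar>(\<Prod>j<i. a - real j) * (\<Prod>j<n - i. b - real j) - a ^ i * b ^ (n - i)\<bar> \<le> real n * real n * B ^ (n - 1)"
proof -
  define x where "x j = (if j < i then a - real j else b - real (j - i))" for j :: nat
  define y where "y j = (if j < i then a else b)" for j :: nat
  have split: "(\<Prod>j<n. f j) = (\<Prod>j<i. f j) * (\<Prod>j<n - i. f (i + j))" for f :: "nat \<Rightarrow> real"
    using prod.atLeastLessThan_concat[of 0 i n f] prod.atLeastLessThan_shift_0[of f i n] assms(6)
    by (simp add: atLeast0LessThan)
  have "(\<Prod>j<n. x j) = (\<Prod>j<i. a - real j) * (\<Prod>j<n - i. b - real j)"
    unfolding split by (simp add: x_def)
  moreover have "(\<Prod>j<n. y j) = a ^ i * b ^ (n - i)"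
    unfolding split by (simp add: y_def)
  moreover have "\<bar>(\<Prod>j<n. x j) - (\<Prod>j<n. y j)\<bar> \<le> real n * real n * B ^ (n - 1)"
    using assms by (intro prod_approx) (auto simp: x_def y_def of_nat_diff)
  ultimately show ?thesis by simp
qed

lemma lead_coeff_pos_if_eventually_pos:
  fixes p :: "real poly"
  assumes pos: "\<And>x. a \<le> x \<Longrightarrow> 0 < poly p x"
  shows "0 < lead_coeff p"
proof (rule ccontr)
  assume "\<not> 0 < lead_coeff p"
  moreover have "p \<noteq> 0" using pos[of a] by auto
  ultimately have "0 < lead_coeff (- p)" by (simp add: less_le)
  then obtain n where n: "\<And>x. n \<le> x \<Longrightarrow> lead_coeff (- p) \<le> poly (- p) x"
    using poly_pinfty_gt_lc by blast
  have "lead_coeff (- p) \<le> poly (- p) (max a n)" by (rule n) simp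
  with \<open>0 < lead_coeff (- p)\<close> pos[of "max a n"] show False by simp
qed

definition homogenization :: "real poly \<Rightarrow> real \<Rightarrow> real \<Rightarrow> real" where
  "homogenization p x y = (\<Sum>i\<le>degree p. coeff p i * x ^ i * y ^ (degree p - i))"

lemma homogenization_scale:
  "homogenization p (c * x) (c * y) = c ^ degree p * homogenization p x y"
  unfolding homogenization_def sum_distrib_left
proof (rule sum.cong)
  fix i assume "i \<in> {..degree p}"
  then have "c ^ i * c ^ (degree p - i) = c ^ degree p" by (simp flip: power_add)
  then show "coeff p i * (c * x) ^ i * (c * y) ^ (degree p - i)
      = c ^ degree p * (coeff p i * x ^ i * y ^ (degree p - i))"
    by (simp add: power_mult_distrib algebra_simps)
qed simp

lemma homogenization_pos:
  assumes pos: "\<And>x. 0 \<le> x \<Longrightarrow> 0 < poly p x" and "0 \<le> t" "t \<le> 1"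
  shows "0 < homogenization p t (1 - t)"
proof (cases "t = 1")
  case True
  have "homogenization p t (1 - t) = (\<Sum>i\<le>degree p. if i = degree p then coeff p i else 0)"
    unfolding homogenization_def True by (rule sum.cong) (auto simp: power_0_left)
  then have "homogenization p t (1 - t) = lead_coeff p" by simp
  then show ?thesis using lead_coeff_pos_if_eventually_pos[OF pos] by simp
next
  case False
  then have "0 < 1 - t" using assms by simp
  have "homogenization p t (1 - t) = homogenization p ((1 - t) * (t / (1 - t))) ((1 - t) * 1)"
    using \<open>0 < 1 - t\<close> by simp
  also have "\<dots> = (1 - t) ^ degree p * poly p (t / (1 - t))"
    by (simp only: homogenization_scale) (simp add: homogenization_def poly_altdef)
  finally show ?thesis using \<open>0 < 1 - t\<close> assms by (simp add: pos)
qed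

lemma coeff_binomial_power: "coeff ([:1, 1:] ^ N) k = (of_nat (N choose k) :: 'a :: comm_semiring_1)"
proof (cases "k \<le> N")
  case False
  have "degree ([:1, 1::'a:] ^ N) \<le> N"
    by (rule order.trans[OF degree_power_le]) simp
  then show ?thesis using False by (simp add: coeff_eq_0 binomial_eq_0)
qed (simp add: coeff_linear_poly_power)

lemma coeff_binomial_power_mult:
  fixes p :: "'a :: comm_semiring_1 poly"
  shows "coeff ([:1, 1:] ^ N * p) m
    = (\<Sum>i\<le>degree p. coeff p i * (if i \<le> m then of_nat (N choose (m - i)) else 0))"
proof -
  have "coeff ([:1, 1:] ^ N * p) m = (\<Sum>i\<le>m. coeff p i * of_nat (N choose (m - i)))"
    by (simp add: coeff_mult mult.commute[of "[:1, 1:] ^ N"] coeff_binomial_power)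
  also have "\<dots> = (\<Sum>i\<le>m + degree p. coeff p i * (if i \<le> m then of_nat (N choose (m - i)) else 0))"
    by (rule sum.mono_neutral_cong_left) auto
  also have "\<dots> = (\<Sum>i\<le>degree p. coeff p i * (if i \<le> m then of_nat (N choose (m - i)) else 0))"
    by (rule sum.mono_neutral_cong_right) (auto simp: coeff_eq_0)
  finally show ?thesis .
qed

lemma polya_sum_nonneg:
  fixes p :: "real poly" and m T :: nat
  defines "n \<equiv> degree p"
  assumes \<mu>: "0 < \<mu>" "\<And>t. 0 \<le> t \<Longrightarrow> t \<le> 1 \<Longrightarrow> \<mu> \<le> homogenization p t (1 - t)"
    and "m \<le> T" "n \<le> T" "0 < T"
    and large: "(\<Sum>i\<le>n. \<bar>coeff p i\<bar>) * real n * real n \<le> real T * \<mu>"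
  shows "0 \<le> (\<Sum>i\<le>n. coeff p i * ((\<Prod>j<i. real m - real j) * (\<Prod>j<n - i. real (T - m) - real j)))"
proof -
  define F where "F i = (\<Prod>j<i. real m - real j) * (\<Prod>j<n - i. real (T - m) - real j)" for i
  define G where "G i = real m ^ i * real (T - m) ^ (n - i)" for i
  define A where "A = (\<Sum>i\<le>n. \<bar>coeff p i\<bar>)"
  define err where "err = real n * real n * real T ^ (n - 1)"
  have "\<bar>F i - G i\<bar> \<le> err" if "i \<le> n" for i
    unfolding F_def G_def err_def using assms that by (intro falling_products_approx) auto
  then have "\<bar>coeff p i * F i - coeff p i * G i\<bar> \<le> \<bar>coeff p i\<bar> * err" if "i \<le> n" for i
    using that by (simp add: abs_mult mult_left_mono flip: right_diff_distrib)
  then have "\<bar>(\<Sum>i\<le>n. coeff p i * F i) - (\<Sum>i\<le>n. coeff p i * G i)\<bar> \<le> A * err"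
    unfolding A_def sum_distrib_right sum_subtractf[symmetric]
    by (intro order.trans[OF sum_abs sum_mono]) auto
  moreover have "(\<Sum>i\<le>n. coeff p i * G i) = homogenization p (real T * (m / T)) (real T * (1 - m / T))"
    using \<open>0 < T\<close> \<open>m \<le> T\<close>
    by (simp add: homogenization_def G_def n_def of_nat_diff algebra_simps)
  also have "\<dots> = real T ^ n * homogenization p (m / T) (1 - m / T)"
    by (simp only: homogenization_scale n_def)
  also have "\<dots> \<ge> real T ^ n * \<mu>"
    using \<mu>(2)[of "m / T"] \<open>0 < T\<close> \<open>m \<le> T\<close> by simp
  moreover have "A * err \<le> real T ^ n * \<mu>"
  proof (cases n)
    case (Suc k)
    have "A * err = A * real n * real n * real T ^ k" by (simp add: err_def Suc)
    also have "\<dots> \<le> real T * \<mu> * real T ^ k"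
      using large by (intro mult_right_mono) (simp_all add: A_def)
    finally show ?thesis by (simp add: Suc algebra_simps)
  qed (use \<mu> in \<open>simp add: err_def\<close>)
  ultimately show ?thesis unfolding F_def[symmetric] by linarith
qed

text \<open>With \<open>T = N + n\<close>, \<open>(T choose n) n!\<close> times the \<open>m\<close>-th coefficient of \<open>(1 + x) ^ N * p\<close>
  is \<open>T choose m\<close> times a sum in which falling factorials replace the powers in
  \<open>homogenization p m (T - m) = T ^ n * homogenization p (m / T) (1 - m / T)\<close>; for large \<open>N\<close>
  the error is dominated by \<open>T ^ n\<close> times the minimum of the homogenization on the simplex.\<close>
theorem polya_nonneg_coeffs:
  fixes p :: "real poly"
  assumes pos: "\<And>x. 0 \<le> x \<Longrightarrow> 0 < poly p x"
  shows "\<exists>N. \<forall>m. 0 \<le> coeff ([:1, 1:] ^ N * p) m"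
proof -
  define n where "n = degree p"
  have "continuous_on {0..1} (\<lambda>t. homogenization p t (1 - t))"
    unfolding homogenization_def by (intro continuous_intros)
  then obtain t0 where "t0 \<in> {0..1}"
    and t0: "\<And>t. t \<in> {0..1} \<Longrightarrow> homogenization p t0 (1 - t0) \<le> homogenization p t (1 - t)"
    using continuous_attains_inf[of "{0..1}" "\<lambda>t. homogenization p t (1 - t)"] by auto
  define \<mu> where "\<mu> = homogenization p t0 (1 - t0)"
  have \<mu>: "0 < \<mu>" using homogenization_pos[OF pos] \<open>t0 \<in> {0..1}\<close> by (simp add: \<mu>_def)
  define A where "A = (\<Sum>i\<le>n. \<bar>coeff p i\<bar>)"
  define N where "N = nat \<lceil>A * n * n / \<mu>\<rceil> + 1"
  define T where "T = N + n"
  have "A * n * n / \<mu> \<le> real T"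
    unfolding T_def N_def by linarith
  then have large: "A * n * n \<le> real T * \<mu>" using \<mu> by (simp add: field_simps)
  have "0 \<le> coeff ([:1, 1:] ^ N * p) m" for m
  proof -
    define S where "S = (\<Sum>i\<le>n. coeff p i * ((\<Prod>j<i. real m - real j) * (\<Prod>j<n - i. real (T - m) - real j)))"
    have eq: "real (T choose n) * fact n * coeff ([:1, 1:] ^ N * p) m = real (T choose m) * S"
      unfolding coeff_binomial_power_mult S_def sum_distrib_left T_def n_def
      by (intro sum.cong refl) (simp add: choose_mult_falling[symmetric] algebra_simps)
    have "0 \<le> real (T choose m) * S"
    proof (cases "m \<le> T")
      case True
      then have "0 \<le> S" unfolding S_def n_def
        using \<mu> t0 large by (intro polya_sum_nonneg) (auto simp: \<mu>_def A_def n_def T_def N_def)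
      then show ?thesis by simp
    next
      case False
      then have "T choose m = 0" by simp
      then show ?thesis by (simp del: binomial_eq_0_iff)
    qed
    moreover have "0 < real (T choose n) * fact n" by (simp add: T_def)
    ultimately show ?thesis unfolding eq[symmetric] by (simp add: zero_le_mult_iff)
  qed
  then show ?thesis by blast
qed

section \<open>Failure of the ACCP\<close>

lemma poly_pos_on_ray:
  fixes p :: "real poly"
  assumes "0 < poly p a" "\<And>x. a \<le> x \<Longrightarrow> poly p x \<noteq> 0" "a \<le> x"
  shows "0 < poly p x"
proof (rule ccontr)
  assume "\<not> 0 < poly p x"
  then have "poly p x < 0" "a < x" using assms by (auto simp: less_le)
  then obtain z where "a < z" "poly p z = 0" using poly_IVT_neg[of a x p] assms(1) by auto
  with assms(2)[of z] show False by simp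
qed

lemma poly_pos_near_1:
  fixes p :: "real poly"
  assumes pos: "\<And>x. 1 \<le> x \<Longrightarrow> 0 < poly p x"
  obtains a where "0 \<le> a" "a < 1" "\<And>x. a \<le> x \<Longrightarrow> 0 < poly p x"
proof -
  have "isCont (poly p) 1" by (rule poly_isCont)
  then have "poly p \<midarrow>1\<rightarrow> poly p 1" by (simp add: isCont_def)
  from LIM_fun_gt_zero[OF this] pos[of 1]
  obtain r where "0 < r" and r: "\<And>x. x \<noteq> 1 \<Longrightarrow> \<bar>1 - x\<bar> < r \<Longrightarrow> 0 < poly p x"
    by auto
  show ?thesis
  proof (rule that[of "max 0 (1 - r / 2)"])
    fix x assume "max 0 (1 - r / 2) \<le> x"
    then show "0 < poly p x" using pos r[of x] \<open>0 < r\<close> by (cases "x < 1") auto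
  qed (use \<open>0 < r\<close> in auto)
qed

lemma poly_pos_bounded_below:
  fixes p :: "real poly"
  assumes pos: "\<And>x. a \<le> x \<Longrightarrow> 0 < poly p x"
  obtains c where "0 < c" "\<And>x. a \<le> x \<Longrightarrow> c \<le> poly p x"
proof -
  obtain R where R: "\<And>x. R \<le> x \<Longrightarrow> lead_coeff p \<le> poly p x"
    using poly_pinfty_gt_lc[OF lead_coeff_pos_if_eventually_pos[OF pos]] by blast
  have "continuous_on {a..max a R} (poly p)" by (intro continuous_intros)
  then obtain t where t: "t \<in> {a..max a R}" "\<And>x. x \<in> {a..max a R} \<Longrightarrow> poly p t \<le> poly p x"
    using continuous_attains_inf[of "{a..max a R}" "poly p"] by auto
  show ?thesis
  proof (rule that[of "min (lead_coeff p) (poly p t)"])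
    show "0 < min (lead_coeff p) (poly p t)"
      using lead_coeff_pos_if_eventually_pos[OF pos] pos t(1) by simp
    fix x assume "a \<le> x"
    show "min (lead_coeff p) (poly p t) \<le> poly p x"
    proof (cases "x \<le> max a R")
      case True
      then show ?thesis using t(2)[of x] \<open>a \<le> x\<close> by simp
    next
      case False
      then have "R \<le> x" by simp
      then show ?thesis using R[of x] by simp
    qed
  qed
qed

lemma exists_pos_power_small:
  fixes a K \<epsilon> :: real
  assumes "0 \<le> a" "a < 1" "0 < \<epsilon>" "0 \<le> K"
  obtains j where "0 < j" "K * a ^ j < \<epsilon>"
proof -
  obtain k where k: "a ^ k < \<epsilon> / (K + 1)"
    using real_arch_pow_inv[of "\<epsilon> / (K + 1)" a] assms by auto
  have "a ^ Suc k \<le> a ^ k" using assms by (intro power_decreasing) auto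
  then have "K * a ^ Suc k \<le> (K + 1) * a ^ k"
    using assms by (intro mult_mono) auto
  also have "\<dots> < \<epsilon>" using k assms by (simp add: field_simps)
  finally show ?thesis using that[of "Suc k"] by simp
qed

text \<open>Choose \<open>a < 1\<close> with \<open>p \<ge> b > 0\<close> on \<open>[a, \<infinity>)\<close>. There \<open>c b \<ge> 1\<close> makes the second summand
  exceed \<open>x - 1\<close>; on \<open>[0, a)\<close> a large \<open>j\<close> makes it smaller than \<open>1 - a\<close>.\<close>
lemma exists_positive_perturbation:
  fixes p :: "real poly"
  assumes pos: "\<And>x. 1 \<le> x \<Longrightarrow> 0 < poly p x"
  obtains c j :: nat where "\<And>x. 0 \<le> x \<Longrightarrow> 0 < 1 - x + real c * x ^ j * poly p x"
proof -
  obtain a where a: "0 \<le> a" "a < 1" and pos_a: "\<And>x. a \<le> x \<Longrightarrow> 0 < poly p x"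
    using poly_pos_near_1[OF pos] by blast
  obtain b where "0 < b" and b: "\<And>x. a \<le> x \<Longrightarrow> b \<le> poly p x"
    using poly_pos_bounded_below[OF pos_a] by blast
  have "continuous_on {0..1} (\<lambda>x. \<bar>poly p x\<bar>)" by (intro continuous_intros)
  then obtain x0 where "\<forall>x\<in>{0..1}. \<bar>poly p x\<bar> \<le> \<bar>poly p x0\<bar>"
    using continuous_attains_sup[of "{0..1}" "\<lambda>x. \<bar>poly p x\<bar>"] by auto
  then obtain B where B: "\<And>x. x \<in> {0..1} \<Longrightarrow> \<bar>poly p x\<bar> \<le> B" by blast
  define c where "c = nat \<lceil>1 / b\<rceil>"
  have "1 / b \<le> real c" unfolding c_def by (rule real_nat_ceiling_ge)
  then have cb: "1 \<le> real c * b" using \<open>0 < b\<close> by (simp add: field_simps)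
  obtain j where "0 < j" and small: "real c * \<bar>B\<bar> * a ^ j < 1 - a"
    using exists_pos_power_small[OF a, of "1 - a" "real c * \<bar>B\<bar>"] a by auto
  have "0 < 1 - x + real c * x ^ j * poly p x" if "0 \<le> x" for x
  proof (cases "a \<le> x")
    case True
    have "0 \<le> real c * x ^ j * poly p x" using pos_a[OF True] that by simp
    moreover have "x \<le> real c * x ^ j * poly p x" if "1 \<le> x"
    proof -
      have "x \<le> x ^ j" using power_increasing[of 1 j x] that \<open>0 < j\<close> by simp
      have "1 \<le> real c * poly p x"
        using cb mult_left_mono[OF b[OF True], of "real c"] by simp
      then have "x ^ j * 1 \<le> x ^ j * (real c * poly p x)"
        using \<open>0 \<le> x\<close> by (intro mult_left_mono) auto
      with \<open>x \<le> x ^ j\<close> show ?thesis by (simp add: algebra_simps)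
    qed
    ultimately show ?thesis by (cases "1 \<le> x") auto
  next
    case False
    have "\<bar>poly p x\<bar> \<le> \<bar>B\<bar>" using B[of x] False a that by auto
    moreover have "x ^ j \<le> a ^ j" using False that by (intro power_mono) auto
    ultimately have "\<bar>real c * x ^ j * poly p x\<bar> \<le> real c * a ^ j * \<bar>B\<bar>"
      unfolding abs_mult using that a by (intro mult_mono) auto
    then show ?thesis using small False by (simp add: algebra_simps)
  qed
  then show ?thesis by (rule that)
qed

lemma ipoly_mem_laurent:
  assumes "\<And>i. 0 \<le> coeff W i"
  shows "ipoly W \<alpha> \<in> range (laurent_eval \<alpha>)"
proof -
  have "ipoly W \<alpha> = (\<Sum>i\<le>degree W. real (nat (coeff W i)) * \<alpha> powi int i)"
    using assms by (simp add: poly_altdef degree_map_poly coeff_map_poly)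
  also have "\<dots> = laurent_eval \<alpha> (\<Sum>i\<le>degree W. replicate_mset (nat (coeff W i)) (int i))"
    by (simp add: laurent_eval_sum_replicate)
  finally show ?thesis by blast
qed

lemma not_ACCP_laurent_if_cofactor:
  assumes \<alpha>: "0 < \<alpha>" "\<alpha> < 1"
    and y: "y \<in> range (laurent_eval \<alpha>)" "0 < y" "(1 - \<alpha>) * y \<in> range (laurent_eval \<alpha>)"
  shows "\<not> satisfies_ACCP (range (laurent_eval \<alpha>))"
proof -
  have scale: "\<alpha> ^ n * z \<in> range (laurent_eval \<alpha>)" if "z \<in> range (laurent_eval \<alpha>)" for z n
    using that \<alpha> by (auto simp: power_mult_laurent_eval)
  show ?thesis
  proof (rule not_ACCP_if_strictly_decreasing[OF positive_monoid_laurent[OF \<alpha>(1)]])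
    fix n
    show "\<alpha> ^ n * y \<in> range (laurent_eval \<alpha>)" using scale[OF y(1)] .
    have "\<alpha> ^ n * y - \<alpha> ^ Suc n * y = \<alpha> ^ n * ((1 - \<alpha>) * y)" by (simp add: algebra_simps)
    then show "\<alpha> ^ n * y - \<alpha> ^ Suc n * y \<in> range (laurent_eval \<alpha>)" using scale[OF y(3)] by simp
    show "\<alpha> ^ Suc n * y < \<alpha> ^ n * y" using \<alpha> y(2) by simp
  qed
qed

lemma not_ACCP_laurent_if_no_root_ge_1:
  assumes \<alpha>: "0 < \<alpha>" "\<alpha> < 1" and "ipoly P \<alpha> = 0" and no_root: "\<And>x. 1 \<le> x \<Longrightarrow> ipoly P x \<noteq> 0"
  shows "\<not> satisfies_ACCP (range (laurent_eval \<alpha>))"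
proof -
  obtain Q where Q\<alpha>: "ipoly Q \<alpha> = 0" and Q_pos: "\<And>x. 1 \<le> x \<Longrightarrow> 0 < ipoly Q x"
  proof (cases "0 < ipoly P 1")
    case True
    then show ?thesis using that[of P] assms poly_pos_on_ray[of "map_poly of_int P" 1] by blast
  next
    case False
    then have "0 < ipoly (- P) 1" using no_root[of 1] by (simp add: map_poly_of_int_minus)
    then show ?thesis
      using that[of "- P"] assms poly_pos_on_ray[of "map_poly of_int (- P)" 1]
      by (simp add: map_poly_of_int_minus)
  qed
  obtain c j :: nat where G_pos: "\<And>x. 0 \<le> x \<Longrightarrow> 0 < 1 - x + real c * x ^ j * ipoly Q x"
    using exists_positive_perturbation[OF Q_pos] by blast
  define G where "G = [:1, -1:] + monom (int c) j * Q"
  have G: "ipoly G x = 1 - x + real c * x ^ j * ipoly Q x" for x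
    by (simp add: G_def map_poly_of_int_simps poly_monom)
  obtain N where N: "\<And>m. 0 \<le> coeff ([:1, 1:] ^ N * map_poly real_of_int G) m"
    using polya_nonneg_coeffs[of "map_poly of_int G"] G_pos G by auto
  define y where "y = (1 + \<alpha>) ^ N"
  have "y \<in> range (laurent_eval \<alpha>)"
    using ipoly_mem_laurent[of "[:1, 1:] ^ N" \<alpha>]
    by (simp add: y_def coeff_binomial_power map_poly_of_int_simps poly_power)
  moreover have "(1 - \<alpha>) * y \<in> range (laurent_eval \<alpha>)"
  proof -
    have "map_poly real_of_int ([:1, 1:] ^ N * G) = [:1, 1:] ^ N * map_poly of_int G"
      by (simp add: map_poly_of_int_simps)
    then have "coeff ([:1, 1:] ^ N * G) m \<ge> 0" for m
      using N[of m] by (metis coeff_map_poly of_int_0 of_int_0_le_iff)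
    then show ?thesis
      using ipoly_mem_laurent[of "[:1, 1:] ^ N * G" \<alpha>] G Q\<alpha>
      by (simp add: y_def map_poly_of_int_simps poly_power mult.commute)
  qed
  ultimately show ?thesis using not_ACCP_laurent_if_cofactor[OF \<alpha>] \<alpha> by (simp add: y_def)
qed

lemma laurent_FFM_or_not_ACCP:
  assumes "0 < \<alpha>" "\<alpha> \<le> 1"
  shows "is_FFM (range (laurent_eval \<alpha>)) \<or> \<not> satisfies_ACCP (range (laurent_eval \<alpha>))"
proof (cases "\<alpha> = 1")
  case True
  then show ?thesis using FFM_laurent_1 by simp
next
  case False
  with assms have \<alpha>: "0 < \<alpha>" "\<alpha> < 1" by auto
  show ?thesis
  proof (cases "\<exists>\<beta>>1. \<forall>Q. ipoly Q \<alpha> = 0 \<longrightarrow> ipoly Q \<beta> = 0")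
    case True
    then show ?thesis using FFM_laurent_if_conjugate_gt_1[OF \<alpha>] by blast
  next
    case False
    then obtain P where "ipoly P \<alpha> = 0" "\<And>x. 1 \<le> x \<Longrightarrow> ipoly P x \<noteq> 0"
      using int_poly_without_root_ge_1 \<open>\<alpha> \<noteq> 1\<close> by blast
    then show ?thesis using not_ACCP_laurent_if_no_root_ge_1[OF \<alpha>] by blast
  qed
qed

theorem theorem4p3:
  fixes \<alpha> :: real
  assumes "\<alpha> > 0"
  shows "(is_FFM (laurent_monoid \<alpha>) \<longleftrightarrow> is_BFM (laurent_monoid \<alpha>))
       \<and> (is_BFM (laurent_monoid \<alpha>) \<longleftrightarrow> satisfies_ACCP (laurent_monoid \<alpha>))"
proof -
  define \<gamma> where "\<gamma> = (if \<alpha> \<le> 1 then \<alpha> else inverse \<alpha>)"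
  have \<gamma>: "0 < \<gamma>" "\<gamma> \<le> 1" using assms by (auto simp: \<gamma>_def inverse_le_1_iff)
  have "laurent_monoid \<alpha> = range (laurent_eval \<gamma>)"
    by (simp add: \<gamma>_def laurent_monoid_inverse flip: laurent_monoid_eq_range)
  then show ?thesis
    using FFM_BFM_ACCP_equiv[OF positive_monoid_laurent[OF \<gamma>(1)] laurent_FFM_or_not_ACCP[OF \<gamma>]]
    by simp
qed

end
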